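(* Let $m\ge1$, $n\ge0$ and let $\mu$ be a partition with $\ell(\mu)=n+1$ and $\mu_1<m$. Let $\mu^c$ be the complement of $\mu$ in the rectangle $(m^{n+1})$, i.e. $\mu^c_i=m-\mu_{n+2-i}$ for $1\le i\le n+1$. Then $$f_\mu(q,t)-f_{\mu^c}(q,t)=\frac{1}{1-q}\sum_{j=0}^{n}t^j\big(q^{\mu^c_{n+1-j}}-q^{\mu_{n+1-j}}\big).$$
   Context: For a partition $\nu$, $f_\nu(q,t)=\sum_{x\in\nu}q^{a(x)}t^{l(x)}$, where for a box $x=(r,c)$ of $\nu$ the arm is $a(x)=\nu_r-c$ and the leg is $l(x)=\nu'_c-r$. *)

theory Defs
  imports Main
begin

text \<open>Partitions are represented as lists of positive naturals in weakly
decreasing order; part \<nu> i is the 1-based i-th part (0 beyond the length).\<close>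

definition is_partition :: "nat list \<Rightarrow> bool" where
  "is_partition \<nu> \<longleftrightarrow> sorted_wrt (\<ge>) \<nu> \<and> (\<forall>x\<in>set \<nu>. 0 < x)"

definition part :: "nat list \<Rightarrow> nat \<Rightarrow> nat" where
  "part \<nu> i = (if 1 \<le> i \<and> i \<le> length \<nu> then \<nu> ! (i - 1) else 0)"

definition conj_part :: "nat list \<Rightarrow> nat \<Rightarrow> nat" where
  "conj_part \<nu> c = card {r. 1 \<le> r \<and> r \<le> length \<nu> \<and> c \<le> part \<nu> r}"

definition boxes :: "nat list \<Rightarrow> (nat \<times> nat) set" where
  "boxes \<nu> = {(r, c). 1 \<le> r \<and> r \<le> length \<nu> \<and> 1 \<le> c \<and> c \<le> part \<nu> r}"

definition arm :: "nat list \<Rightarrow> nat \<times> nat \<Rightarrow> nat" where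
  "arm \<nu> x = part \<nu> (fst x) - snd x"

definition leg :: "nat list \<Rightarrow> nat \<times> nat \<Rightarrow> nat" where
  "leg \<nu> x = conj_part \<nu> (snd x) - fst x"

definition f_poly :: "nat list \<Rightarrow> 'a::comm_ring_1 \<Rightarrow> 'a \<Rightarrow> 'a" where
  "f_poly \<nu> q t = (\<Sum>x\<in>boxes \<nu>. q ^ arm \<nu> x * t ^ leg \<nu> x)"

definition complement :: "nat \<Rightarrow> nat \<Rightarrow> nat list \<Rightarrow> nat list" where
  "complement m n \<mu> = map (\<lambda>i. m - part \<mu> (n + 2 - i)) [1..<n+2]"

end

theory Submission imports Defs begin

text \<open>Put \<open>\<nu>_0 = m\<close>, \<open>\<nu>_j = 0\<close> beyond the length of \<open>\<nu>\<close>, and \<open>E(a,b) = q^(\<nu>_a - \<nu>_b)\<close>.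
In row \<open>r\<close> of \<open>\<nu>\<close> the boxes in the columns \<open>\<nu>_(s+1) < c \<le> \<nu>_s\<close> all have leg \<open>s - r\<close>, so
summing the geometric series in \<open>q\<close> row by row gives
\<open>(1 - q) f_\<nu> = \<Sum>_(1 \<le> r \<le> s) t^(s-r) (E(r,s) - E(r,s+1))\<close>. Applied to the complement and
reflected through the centre of the rectangle, the same expansion reads
\<open>\<Sum>_(1 \<le> r \<le> s) t^(s-r) (E(r,s) - E(r-1,s))\<close>. In the difference, the terms on each
diagonal \<open>s - r = d\<close> telescope to \<open>E(0,d+1) - E(n+1-d,n+2)\<close>.\<close>

lemma part_antimono:
  assumes "is_partition \<nu>" "1 \<le> i" "i \<le> j"
  shows "part \<nu> j \<le> part \<nu> i"
proof (cases "j \<le> length \<nu> \<and> i \<noteq> j")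
  case True
  with assms have "\<nu> ! (j - 1) \<le> \<nu> ! (i - 1)"
    unfolding is_partition_def sorted_wrt_iff_nth_less by auto
  with assms True show ?thesis by (simp add: part_def)
qed (auto simp: part_def)

lemma conj_part_eq:
  assumes "is_partition \<nu>" "1 \<le> s" "s \<le> length \<nu>" "part \<nu> (Suc s) < c" "c \<le> part \<nu> s"
  shows "conj_part \<nu> c = s"
proof -
  have "r \<le> s" if "c \<le> part \<nu> r" for r
    using that assms part_antimono[OF assms(1), of "Suc s" r] by (cases "r \<le> s") auto
  moreover have "c \<le> part \<nu> r" if "1 \<le> r" "r \<le> s" for r
    using that assms part_antimono[OF assms(1), of r s] by auto
  ultimately have "{r. 1 \<le> r \<and> r \<le> length \<nu> \<and> c \<le> part \<nu> r} = {1..s}"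
    using assms(3) by fastforce
  then show ?thesis by (simp add: conj_part_def)
qed

lemma boxes_eq_Sigma: "boxes \<nu> = Sigma {1..length \<nu>} (\<lambda>r. {0<..part \<nu> r})"
  unfolding boxes_def by auto

lemma one_minus_mult_sum_power:
  fixes q :: "'a::comm_ring_1"
  assumes "b \<le> a" "a \<le> x"
  shows "(1 - q) * (\<Sum>c\<in>{b<..a}. q ^ (x - c)) = q ^ (x - a) - q ^ (x - b)"
  using assms
proof (induction a)
  case (Suc a)
  show ?case
  proof (cases "b = Suc a")
    case False
    then have "b \<le> a" using Suc.prems by auto
    then have "{b<..Suc a} = insert (Suc a) {b<..a}" by auto
    then have "(1 - q) * (\<Sum>c\<in>{b<..Suc a}. q ^ (x - c))
        = (1 - q) * q ^ (x - Suc a) + (q ^ (x - a) - q ^ (x - b))"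
      using Suc \<open>b \<le> a\<close> by (simp add: distrib_left)
    moreover have "q ^ (x - a) = q * q ^ (x - Suc a)"
      using Suc.prems by (metis Suc_diff_Suc Suc_le_lessD power_Suc)
    ultimately show ?thesis by (simp add: algebra_simps)
  qed simp
qed simp

lemma sum_nested_intervals:
  fixes p :: "nat \<Rightarrow> nat"
  assumes "i \<le> L" "\<And>j k. i \<le> j \<Longrightarrow> j \<le> k \<Longrightarrow> k \<le> Suc L \<Longrightarrow> p k \<le> p j"
  shows "(\<Sum>s=i..L. \<Sum>c\<in>{p (Suc s)<..p s}. F c) = (\<Sum>c\<in>{p (Suc L)<..p i}. F c)"
  using assms
proof (induction i rule: inc_induct)
  case (step i)
  have "p (Suc L) \<le> p (Suc i)" "p (Suc i) \<le> p i"
    using step by auto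
  then have "{p (Suc L)<..p i} = {p (Suc i)<..p i} \<union> {p (Suc L)<..p (Suc i)}"
    by auto
  then have "(\<Sum>c\<in>{p (Suc L)<..p i}. F c)
      = (\<Sum>c\<in>{p (Suc i)<..p i}. F c) + (\<Sum>c\<in>{p (Suc L)<..p (Suc i)}. F c)"
    by (simp add: sum.union_disjoint)
  moreover have "{i..L} = insert i {Suc i..L}"
    using step.hyps by auto
  ultimately show ?case
    using step by simp
qed simp

lemma one_minus_mult_row_sum:
  fixes q t :: "'a::comm_ring_1"
  assumes P: "is_partition \<nu>" and r: "1 \<le> r" "r \<le> length \<nu>"
  shows "(1 - q) * (\<Sum>c\<in>{0<..part \<nu> r}. q ^ (part \<nu> r - c) * t ^ (conj_part \<nu> c - r))
    = (\<Sum>s=r..length \<nu>. t ^ (s - r) * (q ^ (part \<nu> r - part \<nu> s) - q ^ (part \<nu> r - part \<nu> (Suc s))))"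
proof -
  let ?p = "part \<nu>" and ?L = "length \<nu>"
  let ?F = "\<lambda>c. q ^ (?p r - c) * t ^ (conj_part \<nu> c - r)"
  have block: "(1 - q) * (\<Sum>c\<in>{?p (Suc s)<..?p s}. ?F c)
      = t ^ (s - r) * (q ^ (?p r - ?p s) - q ^ (?p r - ?p (Suc s)))" if s: "s \<in> {r..?L}" for s
  proof -
    have bounds: "?p (Suc s) \<le> ?p s" "?p s \<le> ?p r"
      using s r part_antimono[OF P] by auto
    have "(\<Sum>c\<in>{?p (Suc s)<..?p s}. ?F c) = t ^ (s - r) * (\<Sum>c\<in>{?p (Suc s)<..?p s}. q ^ (?p r - c))"
      unfolding sum_distrib_left
      using s r conj_part_eq[OF P, of s] by (intro sum.cong refl) (simp add: mult.commute)
    then have "(1 - q) * (\<Sum>c\<in>{?p (Suc s)<..?p s}. ?F c)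
        = t ^ (s - r) * ((1 - q) * (\<Sum>c\<in>{?p (Suc s)<..?p s}. q ^ (?p r - c)))"
      by (simp only: mult.left_commute)
    also have "\<dots> = t ^ (s - r) * (q ^ (?p r - ?p s) - q ^ (?p r - ?p (Suc s)))"
      using bounds by (simp only: one_minus_mult_sum_power)
    finally show ?thesis .
  qed
  have "?p (Suc ?L) = 0" by (simp add: part_def)
  then have "(\<Sum>c\<in>{0<..?p r}. ?F c) = (\<Sum>s=r..?L. \<Sum>c\<in>{?p (Suc s)<..?p s}. ?F c)"
    using sum_nested_intervals[of r ?L ?p ?F] r part_antimono[OF P] by auto
  then show ?thesis
    using block by (simp add: sum_distrib_left)
qed

lemma one_minus_mult_f_poly:
  fixes q t :: "'a::comm_ring_1"
  assumes "is_partition \<nu>"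
  shows "(1 - q) * f_poly \<nu> q t = (\<Sum>r=1..length \<nu>. \<Sum>s=r..length \<nu>.
      t ^ (s - r) * (q ^ (part \<nu> r - part \<nu> s) - q ^ (part \<nu> r - part \<nu> (Suc s))))"
proof -
  have "(1 - q) * f_poly \<nu> q t = (\<Sum>r=1..length \<nu>. (1 - q) * (\<Sum>c\<in>{0<..part \<nu> r}.
      q ^ (part \<nu> r - c) * t ^ (conj_part \<nu> c - r)))"
    unfolding f_poly_def boxes_eq_Sigma
    by (simp add: sum.Sigma arm_def leg_def split_def sum_distrib_left)
  also have "\<dots> = (\<Sum>r=1..length \<nu>. \<Sum>s=r..length \<nu>.
      t ^ (s - r) * (q ^ (part \<nu> r - part \<nu> s) - q ^ (part \<nu> r - part \<nu> (Suc s))))"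
    by (intro sum.cong refl) (simp add: one_minus_mult_row_sum[OF assms])
  finally show ?thesis .
qed

lemma sum_triangle_reflect:
  "(\<Sum>i=1..N. \<Sum>k=i..N. g i k) = (\<Sum>r=1..N. \<Sum>s=r..N. g (Suc N - s) (Suc N - r))"
proof -
  have "(\<Sum>i=1..N. \<Sum>k=i..N. g i k) = (\<Sum>(i, k)\<in>Sigma {1..N} (\<lambda>i. {i..N}). g i k)"
    by (simp add: sum.Sigma)
  also have "\<dots> = (\<Sum>(r, s)\<in>Sigma {1..N} (\<lambda>r. {r..N}). g (Suc N - s) (Suc N - r))"
    by (rule sum.reindex_bij_witness[where i="\<lambda>(r, s). (Suc N - s, Suc N - r)"
          and j="\<lambda>(i, k). (Suc N - k, Suc N - i)"]) auto
  finally show ?thesis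
    by (simp add: sum.Sigma)
qed

lemma sum_triangle_diagonals:
  "(\<Sum>r=1..N. \<Sum>s=r..N. g r s) = (\<Sum>d<N. \<Sum>k<N - d. g (Suc k) (Suc k + d))"
proof -
  have "(\<Sum>r=1..N. \<Sum>s=r..N. g r s) = (\<Sum>(r, s)\<in>Sigma {1..N} (\<lambda>r. {r..N}). g r s)"
    by (simp add: sum.Sigma)
  also have "\<dots> = (\<Sum>(d, k)\<in>Sigma {..<N} (\<lambda>d. {..<N - d}). g (Suc k) (Suc k + d))"
    by (rule sum.reindex_bij_witness[where i="\<lambda>(d, k). (Suc k, Suc k + d)"
          and j="\<lambda>(r, s). (s - r, r - 1)"]) auto
  finally show ?thesis
    by (simp add: sum.Sigma)
qed

lemma sum_triangle_telescope:
  fixes E :: "nat \<Rightarrow> nat \<Rightarrow> 'a::comm_ring_1"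
  shows "(\<Sum>r=1..N. \<Sum>s=r..N. t ^ (s - r) * (E (r - 1) s - E r (Suc s)))
    = (\<Sum>d<N. t ^ d * (E 0 (Suc d) - E (N - d) (Suc N)))"
proof -
  have "(\<Sum>k<N - d. E k (Suc k + d) - E (Suc k) (Suc (Suc k) + d))
      = E 0 (Suc d) - E (N - d) (Suc N)" if "d < N" for d
    using that sum_lessThan_telescope'[of "\<lambda>k. E k (Suc k + d)" "N - d"] by simp
  then show ?thesis
    unfolding sum_triangle_diagonals by (intro sum.cong refl) (simp flip: sum_distrib_left)
qed

definition framed_part :: "nat \<Rightarrow> nat list \<Rightarrow> nat \<Rightarrow> nat" where
  "framed_part m \<nu> j = (if j = 0 then m else part \<nu> j)"

lemma framed_part_antimono:
  assumes "is_partition \<nu>" "part \<nu> 1 \<le> m" "i \<le> j"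
  shows "framed_part m \<nu> j \<le> framed_part m \<nu> i"
  using assms part_antimono[OF assms(1), of i j] part_antimono[OF assms(1), of 1 j]
  by (auto simp: framed_part_def)

lemma framed_part_le: "is_partition \<nu> \<Longrightarrow> part \<nu> 1 \<le> m \<Longrightarrow> framed_part m \<nu> j \<le> m"
  using framed_part_antimono[of \<nu> m 0 j] by (simp add: framed_part_def)

lemma length_complement [simp]: "length (complement m n \<mu>) = n + 1"
  by (simp add: complement_def)

lemma nth_complement:
  assumes "k < n + 1"
  shows "complement m n \<mu> ! k = m - part \<mu> (n + 1 - k)"
proof -
  have "[1..<n + 2] ! k = Suc k"
    using assms by (simp del: upt_Suc)
  then show ?thesis
    unfolding complement_def using assms by (simp del: upt_Suc)
qed

lemma part_complement:
  assumes "1 \<le> i" "i \<le> n + 2"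
  shows "part (complement m n \<mu>) i = m - framed_part m \<mu> (n + 2 - i)"
  using assms nth_complement[of "i - 1" n m \<mu>]
  by (cases "i = n + 2") (auto simp: part_def framed_part_def)

lemma is_partition_complement:
  assumes P: "is_partition \<mu>" and "part \<mu> 1 < m"
  shows "is_partition (complement m n \<mu>)"
proof -
  have "part \<mu> j < m" for j
    using assms part_antimono[OF P, of 1 j] by (cases "j = 0") (auto simp: part_def)
  moreover have "part \<mu> (n + 1 - i) \<le> part \<mu> (n + 1 - j)" if "i < j" "j < n + 1" for i j
    using that part_antimono[OF P, of "n + 1 - j" "n + 1 - i"] by simp
  ultimately show ?thesis
    unfolding is_partition_def sorted_wrt_iff_nth_less
    by (auto simp: nth_complement diff_le_mono2) (auto simp: complement_def)
qed

lemma one_minus_mult_f_poly_complement: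
  fixes q t :: "'a::comm_ring_1"
  assumes P: "is_partition \<mu>" and lt: "part \<mu> 1 < m"
  shows "(1 - q) * f_poly (complement m n \<mu>) q t = (\<Sum>r=1..n+1. \<Sum>s=r..n+1. t ^ (s - r) *
      (q ^ (framed_part m \<mu> r - framed_part m \<mu> s) - q ^ (framed_part m \<mu> (r - 1) - framed_part m \<mu> s)))"
proof -
  let ?pc = "part (complement m n \<mu>)" and ?P = "framed_part m \<mu>"
  have exponent: "?pc (n + 2 - s) - ?pc (n + 2 - r) = ?P r - ?P s" if "r \<le> s" "s \<le> n + 1" for r s
  proof -
    have "?P s \<le> ?P r" "?P r \<le> m"
      using that lt framed_part_antimono[OF P] framed_part_le[OF P] by simp_all
    then show ?thesis
      using that part_complement[of "n + 2 - r" n m \<mu>] part_complement[of "n + 2 - s" n m \<mu>] by simp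
  qed
  have "(1 - q) * f_poly (complement m n \<mu>) q t = (\<Sum>i=1..n+1. \<Sum>k=i..n+1.
      t ^ (k - i) * (q ^ (?pc i - ?pc k) - q ^ (?pc i - ?pc (Suc k))))"
    unfolding one_minus_mult_f_poly[OF is_partition_complement[OF P lt]] length_complement ..
  also have "\<dots> = (\<Sum>r=1..n+1. \<Sum>s=r..n+1. t ^ (s - r) *
      (q ^ (?pc (n + 2 - s) - ?pc (n + 2 - r)) - q ^ (?pc (n + 2 - s) - ?pc (n + 2 - (r - 1)))))"
    by (subst sum_triangle_reflect) (intro sum.cong refl, auto simp: Suc_diff_le)
  also have "\<dots> = (\<Sum>r=1..n+1. \<Sum>s=r..n+1. t ^ (s - r) *
      (q ^ (?P r - ?P s) - q ^ (?P (r - 1) - ?P s)))"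
  proof (intro sum.cong refl)
    fix r s assume "r \<in> {1..n+1}" "s \<in> {r..n+1}"
    then have "r \<le> s" "r - 1 \<le> s" "s \<le> n + 1" by auto
    show "t ^ (s - r) * (q ^ (?pc (n + 2 - s) - ?pc (n + 2 - r)) - q ^ (?pc (n + 2 - s) - ?pc (n + 2 - (r - 1))))
        = t ^ (s - r) * (q ^ (?P r - ?P s) - q ^ (?P (r - 1) - ?P s))"
      using exponent[OF \<open>r \<le> s\<close>] exponent[OF \<open>r - 1 \<le> s\<close>] \<open>s \<le> n + 1\<close> by simp
  qed
  finally show ?thesis .
qed

lemma one_minus_mult_f_poly_diff_complement:
  fixes q t :: "'a::comm_ring_1"
  assumes P: "is_partition \<mu>" and len: "length \<mu> = n + 1" and lt: "part \<mu> 1 < m"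
  shows "(1 - q) * (f_poly \<mu> q t - f_poly (complement m n \<mu>) q t) = (\<Sum>j=0..n. t ^ j *
      (q ^ part (complement m n \<mu>) (n + 1 - j) - q ^ part \<mu> (n + 1 - j)))"
proof -
  define E where "E a b = q ^ (framed_part m \<mu> a - framed_part m \<mu> b)" for a b
  have expansion: "(1 - q) * f_poly \<mu> q t
      = (\<Sum>r=1..n+1. \<Sum>s=r..n+1. t ^ (s - r) * (E r s - E r (Suc s)))"
    unfolding one_minus_mult_f_poly[OF P] len
    by (intro sum.cong refl) (simp add: E_def framed_part_def)
  have expansion_complement: "(1 - q) * f_poly (complement m n \<mu>) q t
      = (\<Sum>r=1..n+1. \<Sum>s=r..n+1. t ^ (s - r) * (E r s - E (r - 1) s))"
    unfolding one_minus_mult_f_poly_complement[OF P lt] E_def ..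
  have "(1 - q) * (f_poly \<mu> q t - f_poly (complement m n \<mu>) q t)
      = (\<Sum>r=1..n+1. \<Sum>s=r..n+1. t ^ (s - r) * (E (r - 1) s - E r (Suc s)))"
    unfolding right_diff_distrib[of "1 - q"] expansion expansion_complement sum_subtractf[symmetric]
    by (intro sum.cong refl) (simp add: algebra_simps)
  also have "\<dots> = (\<Sum>j<n+1. t ^ j * (E 0 (Suc j) - E (n + 1 - j) (n + 2)))"
    using sum_triangle_telescope[where N = "n + 1" and E = E] by simp
  also have "\<dots> = (\<Sum>j=0..n. t ^ j *
      (q ^ part (complement m n \<mu>) (n + 1 - j) - q ^ part \<mu> (n + 1 - j)))"
  proof (intro sum.cong)
    fix j assume "j \<in> {0..n}"
    then have j: "j \<le> n" by simp
    then have "part (complement m n \<mu>) (n + 1 - j) = m - part \<mu> (Suc j)"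
      using part_complement[of "n + 1 - j" n m \<mu>] by (simp add: framed_part_def Suc_diff_le)
    moreover have "part \<mu> (n + 2) = 0"
      using len by (simp add: part_def)
    ultimately show "t ^ j * (E 0 (Suc j) - E (n + 1 - j) (n + 2))
        = t ^ j * (q ^ part (complement m n \<mu>) (n + 1 - j) - q ^ part \<mu> (n + 1 - j))"
      using j by (simp add: E_def framed_part_def)
  qed auto
  finally show ?thesis .
qed

theorem mainTheorem14:
  fixes m n :: nat and \<mu> :: "nat list" and q t :: "'a::field"
  assumes "m \<ge> 1" and "is_partition \<mu>" and "length \<mu> = n + 1"
    and "part \<mu> 1 < m" and "q \<noteq> 1"
  shows "f_poly \<mu> q t - f_poly (complement m n \<mu>) q t =
    (1 / (1 - q)) * (\<Sum>j=0..n. t ^ j *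
       (q ^ part (complement m n \<mu>) (n + 1 - j) - q ^ part \<mu> (n + 1 - j)))"
proof -
  have "1 - q \<noteq> 0"
    using assms(5) by simp
  then show ?thesis
    unfolding one_minus_mult_f_poly_diff_complement[OF assms(2-4), symmetric] by simp
qed

end
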